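(* Let $A\in M_n(\mathbb{Z})$ induce an ergodic endomorphism of $\mathbb{T}^n$, and let $p$ be an odd prime with $\gcd(p,\det A)=1$. Let $\{u_m\}_{m\ge0}$ be the linear recurrence sequence induced by $A$ and, for $r\ge1$, let $T_r$ be the (minimal) period of the sequence $\{u_m \bmod p^r\}_{m\ge 0}$. Then there is $t\in\mathbb{N}$ such that $T_1=T_2=\cdots=T_t$ and $T_k=p^{k-t}T_1$ for every $k>t$.
   Context: Write $f(x)=\det(xI-A)=x^n-c_{n-1}x^{n-1}-\cdots-c_1x-c_0$. The linear recurrence sequence induced by $A$ is the integer sequence defined by $u_0=u_1=\cdots=u_{n-2}=0$, $u_{n-1}=1$, and $u_{m+n}=c_{n-1}u_{m+n-1}+\cdots+c_1u_{m+1}+c_0u_m$ for $m\ge 0$. When $\gcd(p,\det A)=1$, the sequence $\{u_m\bmod p^r\}$ is purely periodic. The endomorphism $x\mapsto Ax\bmod 1$ of $\mathbb{T}^n=\mathbb{R}^n/\mathbb{Z}^n$ is ergodic if it is ergodic with respect to Lebesgue measure (equivalently, $\det A\neq0$ and no eigenvalue of $A$ is a root of unity). *)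

theory Defs
  imports "Jordan_Normal_Form.Char_Poly"
begin

text \<open>Ergodicity of the toral endomorphism induced by an integer n x n matrix A,
  in the equivalent algebraic form given in the paper's context:
  det A is nonzero and no (complex) eigenvalue of A is a root of unity.\<close>
definition ergodic_toral :: "int mat \<Rightarrow> bool" where
  "ergodic_toral A \<longleftrightarrow> det A \<noteq> 0 \<and>
     (\<forall>z::complex. eigenvalue (map_mat of_int A) z \<longrightarrow> \<not> (\<exists>k>0. z ^ k = 1))"

function lrs :: "(nat \<Rightarrow> int) \<Rightarrow> nat \<Rightarrow> nat \<Rightarrow> int" where
  "lrs c n m = (if m + 1 < n then 0 else if m + 1 = n then 1
               else (\<Sum>i<n. c i * lrs c n (m - n + i)))"
  by pat_completeness auto
termination
  by (relation "measure (\<lambda>(c, n, m). m)") auto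

text \<open>The linear recurrence sequence induced by A (with A n x n):
  f(x) = det(xI - A) = x^n - c_{n-1} x^{n-1} - ... - c_0, so c_i = - coeff f i.\<close>
definition induced_lrs :: "int mat \<Rightarrow> nat \<Rightarrow> int" where
  "induced_lrs A = lrs (\<lambda>i. - coeff (char_poly A) i) (dim_row A)"

definition min_period_mod :: "(nat \<Rightarrow> int) \<Rightarrow> int \<Rightarrow> nat" where
  "min_period_mod u q = (LEAST T. T > 0 \<and> (\<forall>m. u (m + T) mod q = u m mod q))"

end

theory Submission
  imports Defs
begin

text \<open>Every solution of the recurrence is a linear combination of shifts of the fundamental
  solution \<open>u\<close>, so a congruence period of \<open>u\<close> modulo \<open>q\<close> is one of every solution,
  and also of \<open>s/d\<close> for a solution \<open>s\<close> divisible by \<open>d\<close>. Because \<open>c 0 = \<plusminus>det A\<close> is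
  a unit modulo \<open>p\<close>, the sequence is purely periodic modulo every \<open>p^k\<close>.
  If \<open>T\<close> is a period modulo \<open>p^s\<close> with \<open>s \<ge> 1\<close>, then for odd \<open>p\<close>
  \<open>u (m + p T) - u m \<equiv> p (u (m + T) - u m) (mod p^(s+2))\<close>; so if \<open>T\<close> is not a period
  modulo \<open>p^(s+1)\<close>, then \<open>p T\<close> is a period modulo \<open>p^(s+1)\<close> but not modulo \<open>p^(s+2)\<close>.
  Ergodicity rules out eigenvalues that are roots of unity, so \<open>u\<close> is not periodic over
  \<open>\<int>\<close>; hence \<open>T\<^sub>1\<close> is a period modulo \<open>p^t\<close> but not \<open>p^(t+1)\<close> for some \<open>t \<ge> 1\<close>, and
  the lifting step determines every \<open>T\<^sub>k\<close>.\<close>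

declare lrs.simps [simp del]

definition lin_rec :: "(nat \<Rightarrow> int) \<Rightarrow> nat \<Rightarrow> (nat \<Rightarrow> 'a::comm_ring_1) \<Rightarrow> bool" where
  "lin_rec c n s \<longleftrightarrow> (\<forall>m. s (m + n) = (\<Sum>i<n. of_int (c i) * s (m + i)))"

definition period_mod :: "(nat \<Rightarrow> 'a::comm_ring_1) \<Rightarrow> 'a \<Rightarrow> nat \<Rightarrow> bool" where
  "period_mod u q T \<longleftrightarrow> (\<forall>m. q dvd u (m + T) - u m)"

lemma lin_rec_shift:
  assumes "lin_rec c n s"
  shows "lin_rec c n (\<lambda>m. s (m + k))"
  unfolding lin_rec_def
proof
  fix m
  show "s (m + n + k) = (\<Sum>i<n. of_int (c i) * s (m + i + k))"
    using assms[unfolded lin_rec_def, rule_format, of "m + k"] by (simp add: ac_simps)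
qed

lemma lin_rec_diff: "lin_rec c n s \<Longrightarrow> lin_rec c n t \<Longrightarrow> lin_rec c n (\<lambda>m. s m - t m)"
  unfolding lin_rec_def by (simp add: right_diff_distrib sum_subtractf)

lemma lin_rec_scale: "lin_rec c n s \<Longrightarrow> lin_rec c n (\<lambda>m. a * s m)"
  unfolding lin_rec_def by (simp add: sum_distrib_left ac_simps)

lemma lin_rec_of_int:
  "lin_rec c n (s :: nat \<Rightarrow> int) \<Longrightarrow> lin_rec c n (\<lambda>m. (of_int (s m) :: 'a::comm_ring_1))"
  unfolding lin_rec_def by simp

lemma lin_rec_div:
  assumes "lin_rec c n (s :: nat \<Rightarrow> int)" and "\<And>m. d dvd s m"
  shows "lin_rec c n (\<lambda>m. s m div d)"
proof (cases "d = 0")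
  case False
  show ?thesis
    unfolding lin_rec_def
  proof
    fix m
    have "d * (s (m + n) div d) = s (m + n)"
      using assms(2) by simp
    also have "\<dots> = (\<Sum>i<n. c i * s (m + i))"
      using assms(1) by (simp add: lin_rec_def)
    also have "\<dots> = d * (\<Sum>i<n. c i * (s (m + i) div d))"
      unfolding sum_distrib_left
      by (intro sum.cong refl) (metis assms(2) dvd_mult_div_cancel mult.left_commute)
    finally show "s (m + n) div d = (\<Sum>i<n. of_int (c i) * (s (m + i) div d))"
      using False by simp
  qed
qed (use assms in \<open>simp add: lin_rec_def\<close>)

lemma lin_rec_lrs: "lin_rec c n (lrs c n)"
  unfolding lin_rec_def by (subst lrs.simps) simp

lemma lrs_initial:
  assumes "n \<ge> 1"
  shows "j < n - 1 \<Longrightarrow> lrs c n j = 0" and "lrs c n (n - 1) = 1"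
  using assms by (subst lrs.simps; simp)+

lemma lin_rec_dvd:
  assumes "lin_rec c n s" and "\<And>j. j < n \<Longrightarrow> q dvd s j"
  shows "q dvd s m"
proof (induction m rule: less_induct)
  case (less m)
  show ?case
  proof (cases "m < n")
    case False
    then obtain k where k: "m = k + n"
      using le_add_diff_inverse2 by (metis not_less)
    have "s m = (\<Sum>i<n. of_int (c i) * s (k + i))"
      using assms(1) k unfolding lin_rec_def by auto
    also have "q dvd \<dots>"
      using k less by (intro dvd_sum dvd_mult) auto
    finally show ?thesis .
  qed (use assms(2) in auto)
qed

text \<open>Induction on the number of vanishing initial values: subtracting \<open>s z\<close> times the
  shift of \<open>lrs c n\<close> whose single initial 1 sits at position \<open>z\<close> kills one more of them.\<close>
lemma lin_rec_span_lrs: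
  fixes s :: "nat \<Rightarrow> 'a::comm_ring_1"
  assumes "lin_rec c n s" and n: "n \<ge> 1"
  shows "\<exists>a. \<forall>m. s m = (\<Sum>k<n. a k * of_int (lrs c n (m + k)))"
proof -
  let ?v = "\<lambda>m. (of_int (lrs c n m) :: 'a)"
  have "\<forall>s. lin_rec c n s \<longrightarrow> (\<forall>j<z. s j = 0) \<longrightarrow>
          (\<exists>a. \<forall>m. s m = (\<Sum>k<n. a k * ?v (m + k)))" if "z \<le> n" for z
    using that
  proof (induction z rule: inc_induct)
    case base
    show ?case
    proof (intro allI impI)
      fix s :: "nat \<Rightarrow> 'a" assume "lin_rec c n s" "\<forall>j<n. s j = 0"
      hence "s m = 0" for m
        using lin_rec_dvd[of c n s 0] by auto
      thus "\<exists>a. \<forall>m. s m = (\<Sum>k<n. a k * ?v (m + k))" by (intro exI[of _ "\<lambda>_. 0"]) simp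
    qed
  next
    case (step z)
    show ?case
    proof (intro allI impI)
      fix s :: "nat \<Rightarrow> 'a" assume s: "lin_rec c n s" "\<forall>j<z. s j = 0"
      define k where "k = n - 1 - z"
      define s' where "s' m = s m - s z * ?v (m + k)" for m
      have "lin_rec c n s'"
        unfolding s'_def
        by (intro lin_rec_diff s lin_rec_scale lin_rec_shift lin_rec_of_int lin_rec_lrs)
      moreover have "\<forall>j<Suc z. s' j = 0"
        using s(2) step(2) lrs_initial[OF n] unfolding s'_def k_def
        by (auto simp: less_Suc_eq)
      ultimately obtain a where a: "\<And>m. s' m = (\<Sum>i<n. a i * ?v (m + i))"
        using step.IH by blast
      have "k < n" using step(2) unfolding k_def by simp
      have s_span: "s m = (\<Sum>i<n. (a i + (if i = k then s z else 0)) * ?v (m + i))" for m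
      proof -
        have "s m = s' m + s z * ?v (m + k)" unfolding s'_def by simp
        thus ?thesis
          using a[of m] \<open>k < n\<close>
          by (simp add: distrib_right sum.distrib if_distrib[of "\<lambda>y. y * _"] cong: if_cong)
      qed
      show "\<exists>a. \<forall>m. s m = (\<Sum>k<n. a k * ?v (m + k))"
        by (rule exI[of _ "\<lambda>i. a i + (if i = k then s z else 0)"]) (intro allI s_span)
    qed
  qed
  from this[of 0] show ?thesis using assms(1) by simp
qed

lemma period_mod_lin_rec:
  fixes s :: "nat \<Rightarrow> 'a::comm_ring_1"
  assumes "period_mod (\<lambda>m. of_int (lrs c n m)) q T" and "lin_rec c n s" and "n \<ge> 1"
  shows "period_mod s q T"
  unfolding period_mod_def
proof
  fix m
  obtain a where a: "\<And>m. s m = (\<Sum>k<n. a k * of_int (lrs c n (m + k)))"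
    using lin_rec_span_lrs[OF assms(2,3)] by blast
  have "s (m + T) - s m =
      (\<Sum>k<n. a k * (of_int (lrs c n (m + k + T)) - of_int (lrs c n (m + k))))"
    unfolding a by (simp add: right_diff_distrib sum_subtractf ac_simps)
  also have "q dvd \<dots>"
    using assms(1) unfolding period_mod_def by (intro dvd_sum dvd_mult) auto
  finally show "q dvd s (m + T) - s m" .
qed

lemma period_mod_lin_rec_dvd:
  fixes s :: "nat \<Rightarrow> int"
  assumes "period_mod (lrs c n) q T" and "lin_rec c n s" and "n \<ge> 1" and "\<And>m. d dvd s m"
  shows "period_mod s (d * q) T"
proof -
  have "period_mod (\<lambda>m. s m div d) q T"
    using period_mod_lin_rec[OF _ lin_rec_div[OF assms(2,4)] assms(3)] assms(1) by simp
  show ?thesis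
    unfolding period_mod_def
  proof
    fix m
    have "d * q dvd d * (s (m + T) div d - s m div d)"
      using \<open>period_mod (\<lambda>m. s m div d) q T\<close> unfolding period_mod_def
      by (intro mult_dvd_mono) auto
    also have "\<dots> = s (m + T) - s m"
      using assms(4) by (simp add: right_diff_distrib)
    finally show "d * q dvd s (m + T) - s m" .
  qed
qed

lemma period_mod_add: "period_mod u q T \<Longrightarrow> period_mod u q T' \<Longrightarrow> period_mod u q (T + T')"
  unfolding period_mod_def
proof (intro allI)
  fix m
  assume "\<forall>m. q dvd u (m + T) - u m" and "\<forall>m. q dvd u (m + T') - u m"
  hence "q dvd (u (m + T' + T) - u (m + T')) + (u (m + T') - u m)"
    by (blast intro: dvd_add)
  thus "q dvd u (m + (T + T')) - u m" by (simp add: ac_simps)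
qed

lemma period_mod_mult: "period_mod u q T \<Longrightarrow> period_mod u q (k * T)"
  by (induction k) (simp_all add: period_mod_def[of u q 0] period_mod_add)

lemma period_mod_diff:
  assumes "period_mod u q T" and "period_mod u q T'" and "T' \<le> T"
  shows "period_mod u q (T - T')"
  unfolding period_mod_def
proof
  fix m
  have "q dvd (u (m + T) - u m) - (u (m + (T - T') + T') - u (m + (T - T')))"
    using assms(1,2) unfolding period_mod_def by (blast intro: dvd_diff)
  thus "q dvd u (m + (T - T')) - u m"
    using assms(3) by (simp add: algebra_simps)
qed

lemma period_mod_mod:
  assumes "period_mod u q T" and "period_mod u q P"
  shows "period_mod u q (T mod P)"
  using period_mod_diff[OF assms(1) period_mod_mult[OF assms(2), of "T div P"]]
  by (simp add: minus_div_mult_eq_mod)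

lemma period_mod_dvd_modulus: "period_mod u q T \<Longrightarrow> q' dvd q \<Longrightarrow> period_mod u q' T"
  unfolding period_mod_def using dvd_trans by blast

lemma min_period_mod_eq_Least: "min_period_mod u q = (LEAST T. T > 0 \<and> period_mod u q T)"
  unfolding min_period_mod_def period_mod_def by (simp add: mod_eq_dvd_iff)

lemma
  assumes "\<exists>T>0. period_mod u q T"
  shows min_period_mod_pos: "min_period_mod u q > 0"
    and period_mod_min_period_mod: "period_mod u q (min_period_mod u q)"
    and min_period_mod_le: "period_mod u q T \<Longrightarrow> T > 0 \<Longrightarrow> min_period_mod u q \<le> T"
  using LeastI_ex[OF assms] Least_le[of "\<lambda>T. T > 0 \<and> period_mod u q T" T]
  unfolding min_period_mod_eq_Least by auto

lemma min_period_mod_dvd: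
  assumes "\<exists>T>0. period_mod u q T" and "period_mod u q T"
  shows "min_period_mod u q dvd T"
proof -
  let ?P = "min_period_mod u q"
  have "period_mod u q (T mod ?P)"
    using period_mod_mod[OF assms(2) period_mod_min_period_mod[OF assms(1)]] .
  moreover have "T mod ?P < ?P"
    using min_period_mod_pos[OF assms(1)] by simp
  ultimately have "T mod ?P = 0"
    using min_period_mod_le[OF assms(1), of "T mod ?P"] by (cases "T mod ?P") auto
  thus ?thesis by (simp add: dvd_eq_mod_eq_0)
qed

lemma min_period_mod_dvd_modulus:
  assumes "\<exists>T>0. period_mod u q T" and "\<exists>T>0. period_mod u q' T" and "q' dvd q"
  shows "min_period_mod u q' dvd min_period_mod u q"
  by (rule min_period_mod_dvd[OF assms(2)
        period_mod_dvd_modulus[OF period_mod_min_period_mod[OF assms(1)] assms(3)]])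

text \<open>Since \<open>c 0\<close> is invertible modulo \<open>q\<close>, the recurrence can be run backwards.\<close>
lemma period_mod_of_period_mod_Suc:
  assumes "lin_rec c n u" and "n \<ge> 1" and "coprime (c 0) q"
    and "period_mod (\<lambda>m. u (Suc m)) q T"
  shows "period_mod u q T"
  unfolding period_mod_def
proof
  fix m
  define \<delta> where "\<delta> k = u (k + T) - u k" for k
  obtain n' where n': "n = Suc n'" using assms(2) by (cases n) auto
  have "lin_rec c n \<delta>"
    unfolding \<delta>_def by (intro lin_rec_diff lin_rec_shift assms(1))
  hence "c 0 * \<delta> m = \<delta> (Suc (m + n')) - (\<Sum>l<n'. c (Suc l) * \<delta> (Suc (m + l)))"
    unfolding lin_rec_def n' sum.lessThan_Suc_shift by simp
  moreover have "q dvd \<delta> (Suc k)" for k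
    using assms(4) unfolding period_mod_def \<delta>_def by simp
  ultimately have "q dvd c 0 * \<delta> m"
    by (simp add: dvd_diff dvd_sum)
  thus "q dvd u (m + T) - u m"
    using assms(3) unfolding \<delta>_def by (simp add: coprime_commute coprime_dvd_mult_right_iff)
qed

lemma period_mod_of_period_mod_shift:
  assumes "lin_rec c n u" and "n \<ge> 1" and "coprime (c 0) q"
    and "period_mod (\<lambda>m. u (m + i)) q T"
  shows "period_mod u q T"
  using assms(4)
proof (induction i)
  case (Suc i)
  have "period_mod (\<lambda>m. u (m + i)) q T"
    using period_mod_of_period_mod_Suc[OF lin_rec_shift[OF assms(1)] assms(2,3), of i] Suc.prems
    by simp
  thus ?case by (rule Suc.IH)
qed simp

text \<open>Pigeonhole on the windows of length \<open>n\<close> modulo \<open>q\<close> gives an eventual period,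
  which is a period by running the recurrence backwards.\<close>
lemma period_mod_exists:
  assumes "lin_rec c n u" and "n \<ge> 1" and "coprime (c 0) q" and "q > 0"
  shows "\<exists>T>0. period_mod u q T"
proof -
  define window where "window m = map (\<lambda>l. u (m + l) mod q) [0..<n]" for m
  have "range window \<subseteq> {xs. set xs \<subseteq> {0..<q} \<and> length xs = n}"
    unfolding window_def using assms(4) by auto
  hence "\<not> inj window"
    using finite_lists_length_eq[of "{0..<q}" n] finite_subset finite_imageD by blast
  then obtain a b where ab: "a < b" "window a = window b"
    unfolding inj_def by (metis linorder_neqE_nat)
  have "u (l + b) mod q = u (l + a) mod q" if "l < n" for l
    using that arg_cong[OF ab(2), of "\<lambda>xs. xs ! l"] by (simp add: window_def add.commute)
  hence "q dvd u (l + b) - u (l + a)" if "l < n" for l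
    using that by (simp add: mod_eq_dvd_iff)
  moreover have "lin_rec c n (\<lambda>m. u (m + b) - u (m + a))"
    by (intro lin_rec_diff lin_rec_shift assms(1))
  ultimately have "q dvd u (m + b) - u (m + a)" for m
    using lin_rec_dvd[of c n "\<lambda>m. u (m + b) - u (m + a)" q m] by simp
  moreover have "m + (b - a) + a = m + b" for m
    using ab(1) by simp
  ultimately have "period_mod (\<lambda>m. u (m + a)) q (b - a)"
    unfolding period_mod_def by simp
  hence "period_mod u q (b - a)"
    by (rule period_mod_of_period_mod_shift[OF assms(1-3)])
  thus ?thesis using ab(1) by (intro exI[of _ "b - a"]) simp
qed

lemma dvd_linear_approx_of_second_difference:
  fixes x :: "nat \<Rightarrow> 'a::comm_ring_1"
  assumes "\<And>k. Q dvd (x (k + T + T) - x (k + T)) - (x (k + T) - x k)"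
  shows "Q dvd x (m + j * T) - x m - of_nat j * (x (m + T) - x m)"
proof (induction j arbitrary: m)
  case (Suc j)
  have "x (m + Suc j * T) - x m - of_nat (Suc j) * (x (m + T) - x m) =
      (x (m + T + j * T) - x (m + T) - of_nat j * (x (m + T + T) - x (m + T)))
      + of_nat j * ((x (m + T + T) - x (m + T)) - (x (m + T) - x m))"
    by (simp add: algebra_simps)
  thus ?case
    using Suc.IH[of "m + T"] assms[of m] by simp
qed simp

text \<open>With \<open>e m = u (m + T) - u m\<close> divisible by \<open>q = p^s\<close>, each further difference in steps
  of \<open>T\<close> gains a factor \<open>q\<close>. Expanding \<open>u (m + p T) - u m = \<Sum>j<p. e (m + j T)\<close> to second
  order leaves \<open>p (p - 1)/2\<close> times the second difference, which is divisible by \<open>p q\<^sup>2\<close>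
  because \<open>p\<close> is odd.\<close>
lemma lrs_lift_congruence:
  fixes p :: nat
  assumes n: "n \<ge> 1" and "odd p" and "s \<ge> 1"
    and per: "period_mod (lrs c n) (int p ^ s) T"
  shows "int p ^ (s + 2) dvd
           (lrs c n (m + p * T) - lrs c n m) - int p * (lrs c n (m + T) - lrs c n m)"
proof -
  define u where "u = lrs c n"
  define q where "q = int p ^ s"
  define e where "e k = u (k + T) - u k" for k
  define e' where "e' k = e (k + T) - e k" for k
  have rec_e: "lin_rec c n e"
    unfolding e_def u_def by (intro lin_rec_diff lin_rec_shift lin_rec_lrs)
  have rec_e': "lin_rec c n e'"
    unfolding e'_def by (intro lin_rec_diff lin_rec_shift rec_e)
  have "q dvd e k" for k
    using per unfolding period_mod_def e_def u_def q_def by simp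
  hence "period_mod e (q * q) T"
    unfolding q_def by (rule period_mod_lin_rec_dvd[OF per rec_e n])
  hence "q * q dvd e' k" for k
    unfolding period_mod_def e'_def by simp
  hence "period_mod e' (q * q * q) T"
    unfolding q_def by (rule period_mod_lin_rec_dvd[OF per rec_e' n])
  hence approx: "q * q * q dvd e (m + j * T) - e m - of_nat j * e' m" for j
    unfolding period_mod_def e'_def
    by (intro dvd_linear_approx_of_second_difference) (simp add: ac_simps)
  obtain a where a: "p = 2 * a + 1"
    using \<open>odd p\<close> by (blast elim: oddE)
  have "2 * (\<Sum>j<k. j) = k * (k - 1)" for k :: nat
    by (induction k) (auto simp: algebra_simps)
  from this[of p] have "(\<Sum>j<p. j) = p * a"
    unfolding a by simp
  from arg_cong[OF this, of int] have gauss: "(\<Sum>j<p. int j) = int p * int a"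
    by simp
  have "(u (m + p * T) - u m) - int p * e m = (\<Sum>j<p. e (m + j * T) - e m)"
    using sum_lessThan_telescope[of "\<lambda>j. u (m + j * T)" p]
    by (simp add: sum_subtractf e_def ac_simps)
  also have "\<dots> = (\<Sum>j<p. e (m + j * T) - e m - of_nat j * e' m) + int a * (int p * e' m)"
    using gauss by (simp add: sum_subtractf sum_distrib_right[symmetric] ac_simps)
  also have "int p ^ (s + 2) dvd \<dots>"
  proof (intro dvd_add dvd_sum)
    have q3: "q * q * q = int p ^ (s + s + s)" and pq2: "int p * (q * q) = int p ^ (s + s + 1)"
      unfolding q_def by (simp_all add: power_add)
    have "int p ^ (s + 2) dvd q * q * q" and "int p ^ (s + 2) dvd int p * (q * q)"
      unfolding q3 pq2 using \<open>s \<ge> 1\<close> by (intro le_imp_power_dvd; simp)+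
    thus "int p ^ (s + 2) dvd e (m + j * T) - e m - of_nat j * e' m" for j
      using approx dvd_trans by blast
    have "int p * (q * q) dvd int p * e' m"
      using \<open>q * q dvd e' m\<close> by (rule mult_dvd_mono[OF dvd_refl])
    thus "int p ^ (s + 2) dvd int a * (int p * e' m)"
      using \<open>int p ^ (s + 2) dvd int p * (q * q)\<close> by (blast intro: dvd_mult dvd_trans)
  qed
  finally show ?thesis
    unfolding e_def u_def .
qed

lemma lrs_period_lift:
  fixes p :: nat
  assumes "n \<ge> 1" and "odd p" and "s \<ge> 1"
    and per: "period_mod (lrs c n) (int p ^ s) T"
    and not_per: "\<not> period_mod (lrs c n) (int p ^ (s + 1)) T"
  shows "period_mod (lrs c n) (int p ^ (s + 1)) (p * T)"
    and "\<not> period_mod (lrs c n) (int p ^ (s + 2)) (p * T)"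
proof -
  define D where "D T' m = lrs c n (m + T') - lrs c n m" for T' m
  have lift: "int p ^ (s + 2) dvd D (p * T) m - int p * D T m" for m
    unfolding D_def by (rule lrs_lift_congruence[OF assms(1-4)])
  have cancel: "int p ^ (s + 2) dvd int p * x \<longleftrightarrow> int p ^ (s + 1) dvd x" for x
    using \<open>odd p\<close> by (auto simp: power_add)
  show "period_mod (lrs c n) (int p ^ (s + 1)) (p * T)"
    unfolding period_mod_def
  proof
    fix m
    have "int p ^ (s + 1) dvd D (p * T) m - int p * D T m"
      using lift[of m] by (rule dvd_trans[rotated]) (simp add: le_imp_power_dvd)
    moreover have "int p ^ (s + 1) dvd int p * D T m"
      using per unfolding period_mod_def D_def by (simp add: mult_dvd_mono)
    ultimately have "int p ^ (s + 1) dvd (D (p * T) m - int p * D T m) + int p * D T m"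
      by (rule dvd_add)
    hence "int p ^ (s + 1) dvd D (p * T) m"
      by simp
    thus "int p ^ (s + 1) dvd lrs c n (m + p * T) - lrs c n m"
      unfolding D_def .
  qed
  show "\<not> period_mod (lrs c n) (int p ^ (s + 2)) (p * T)"
  proof
    assume "period_mod (lrs c n) (int p ^ (s + 2)) (p * T)"
    hence "int p ^ (s + 2) dvd D (p * T) m - (D (p * T) m - int p * D T m)" for m
      using lift[of m] unfolding period_mod_def D_def by (blast intro: dvd_diff)
    hence "int p ^ (s + 2) dvd int p * D T m" for m
      by simp
    hence "period_mod (lrs c n) (int p ^ (s + 1)) T"
      unfolding period_mod_def D_def cancel by simp
    thus False using not_per by contradiction
  qed
qed

lemma lrs_period_lift_iterate:
  fixes p :: nat
  assumes "n \<ge> 1" and "odd p" and "t \<ge> 1"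
    and "period_mod (lrs c n) (int p ^ t) T"
    and "\<not> period_mod (lrs c n) (int p ^ (t + 1)) T"
  shows "period_mod (lrs c n) (int p ^ (t + j)) (p ^ j * T) \<and>
         \<not> period_mod (lrs c n) (int p ^ (t + j + 1)) (p ^ j * T)"
proof (induction j)
  case (Suc j)
  thus ?case
    using lrs_period_lift[OF assms(1,2), where s = "t + j" and T = "p ^ j * T"] \<open>t \<ge> 1\<close>
    by (simp add: ac_simps)
qed (use assms in simp)

lemma int_eq_0_if_dvd_all_powers:
  fixes q x :: int
  assumes "q > 1" and "\<And>k. q ^ k dvd x"
  shows "x = 0"
proof (rule ccontr)
  assume "x \<noteq> 0"
  have "\<bar>x\<bar> < 2 ^ nat \<bar>x\<bar>"
    using less_exp[of "nat \<bar>x\<bar>"] by (simp add: of_nat_less_iff[symmetric, where 'a = int])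
  also have "\<dots> \<le> q ^ nat \<bar>x\<bar>"
    using \<open>q > 1\<close> by (intro power_mono) auto
  finally show False
    using dvd_imp_le_int[OF \<open>x \<noteq> 0\<close> assms(2)[of "nat \<bar>x\<bar>"]] by simp
qed

lemma period_mod_exact_power:
  fixes q :: int
  assumes "q > 1" and "period_mod u q T" and "\<exists>m. u (m + T) \<noteq> u m"
  shows "\<exists>t\<ge>1. period_mod u (q ^ t) T \<and> \<not> period_mod u (q ^ (t + 1)) T"
proof -
  have "\<exists>k. \<not> period_mod u (q ^ k) T"
    using assms(3) int_eq_0_if_dvd_all_powers[OF assms(1)]
    unfolding period_mod_def by (metis eq_iff_diff_eq_0)
  then obtain k where k: "\<not> period_mod u (q ^ k) T"
    and below: "\<And>i. i < k \<Longrightarrow> period_mod u (q ^ i) T"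
    using exists_least_iff[of "\<lambda>k. \<not> period_mod u (q ^ k) T"] by blast
  have "period_mod u (q ^ 0) T" and "period_mod u (q ^ 1) T"
    using assms(2) by (simp_all add: period_mod_def)
  hence "k \<noteq> 0" and "k \<noteq> 1"
    using k by (metis power_0, metis power_one_right)
  hence "k - 1 \<ge> 1" and "k - 1 + 1 = k"
    by auto
  thus ?thesis
    using k below[of "k - 1"] by (intro exI[of _ "k - 1"]) auto
qed

lemma min_period_mod_prime_power:
  fixes u :: "nat \<Rightarrow> int" and p :: nat
  defines "T\<^sub>1 \<equiv> min_period_mod u (int p)"
  assumes "prime p"
    and periods: "\<And>k. \<exists>T>0. period_mod u (int p ^ k) T"
    and exact: "\<And>j. period_mod u (int p ^ (t + j)) (p ^ j * T\<^sub>1) \<and>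
                      \<not> period_mod u (int p ^ (t + j + 1)) (p ^ j * T\<^sub>1)"
  shows "k \<in> {1..t} \<Longrightarrow> min_period_mod u (int p ^ k) = T\<^sub>1"
    and "t < k \<Longrightarrow> min_period_mod u (int p ^ k) = p ^ (k - t) * T\<^sub>1"
proof -
  have T1_pos: "T\<^sub>1 > 0"
    using min_period_mod_pos[OF periods[of 1]] unfolding T\<^sub>1_def by simp
  have T1_dvd: "T\<^sub>1 dvd min_period_mod u (int p ^ k)" if "k \<ge> 1" for k
    using min_period_mod_dvd_modulus[OF periods[of k] periods[of 1]] that
    unfolding T\<^sub>1_def by (simp add: dvd_power)
  show "min_period_mod u (int p ^ k) = T\<^sub>1" if "k \<in> {1..t}"
  proof (rule antisym)
    have "period_mod u (int p ^ k) T\<^sub>1"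
      using exact[of 0] that by (auto intro: period_mod_dvd_modulus le_imp_power_dvd)
    thus "min_period_mod u (int p ^ k) \<le> T\<^sub>1"
      using min_period_mod_le[OF periods] T1_pos by blast
    show "T\<^sub>1 \<le> min_period_mod u (int p ^ k)"
      using T1_dvd[of k] min_period_mod_pos[OF periods[of k]] that by (simp add: dvd_imp_le)
  qed
  show "min_period_mod u (int p ^ k) = p ^ (k - t) * T\<^sub>1" if "t < k"
  proof -
    define j where "j = k - t"
    have k: "k = t + j" "j \<ge> 1"
      using that unfolding j_def by auto
    let ?P = "min_period_mod u (int p ^ k)"
    have "T\<^sub>1 dvd ?P"
      using T1_dvd that by simp
    then obtain r where r: "?P = T\<^sub>1 * r"
      by (rule dvdE)
    have "?P dvd p ^ j * T\<^sub>1"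
      using min_period_mod_dvd[OF periods] exact[of j] k by simp
    hence "r dvd p ^ j"
      using T1_pos unfolding r by (simp add: mult.commute)
    then obtain i where i: "i \<le> j" "r = p ^ i"
      using divides_primepow_nat[OF \<open>prime p\<close>] by blast
    have "i = j"
    proof (rule ccontr)
      assume "i \<noteq> j"
      hence "?P dvd p ^ (j - 1) * T\<^sub>1"
        using i unfolding r by (simp add: le_imp_power_dvd mult.commute)
      then obtain l where "p ^ (j - 1) * T\<^sub>1 = ?P * l"
        by (rule dvdE)
      hence "period_mod u (int p ^ (t + (j - 1) + 1)) (p ^ (j - 1) * T\<^sub>1)"
        using period_mod_mult[OF period_mod_min_period_mod[OF periods]] k by (simp add: mult.commute)
      thus False
        using exact[of "j - 1"] by simp
    qed
    thus ?thesis
      using r i unfolding j_def by (simp add: mult.commute)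
  qed
qed

lemma coeff_0_char_poly:
  assumes "A \<in> carrier_mat n n"
  shows "coeff (char_poly A) 0 = (-1) ^ n * det (A :: 'a::comm_ring_1 mat)"
proof -
  have "coeff (char_poly A) 0 = poly (char_poly A) 0"
    by (simp add: poly_0_coeff_0)
  also have "\<dots> = det ((-1) \<cdot>\<^sub>m A)"
    unfolding char_poly_def using assms
    by (intro poly_det_cong[of _ n]) (auto simp: char_poly_matrix_def)
  also have "\<dots> = (-1) ^ n * det A"
    using assms by simp
  finally show ?thesis .
qed

lemma lin_rec_powers_of_root:
  fixes f :: "int poly" and z :: "'a::{comm_ring_1, ring_char_0}"
  assumes "degree f = n" and "coeff f n = 1" and "poly (map_poly of_int f) z = 0"
  shows "lin_rec (\<lambda>i. - coeff f i) n (\<lambda>m. z ^ m)"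
  unfolding lin_rec_def
proof
  fix m
  have "degree (map_poly (of_int :: int \<Rightarrow> 'a) f) = n"
    using assms(1,2) by (simp add: degree_map_poly)
  hence "0 = (\<Sum>i\<le>n. of_int (coeff f i) * z ^ i)"
    using assms(3) by (simp add: poly_altdef coeff_map_poly)
  also have "\<dots> = (\<Sum>i<n. of_int (coeff f i) * z ^ i) + z ^ n"
    using assms(2) by (simp add: lessThan_Suc_atMost[symmetric])
  finally have "z ^ n = (\<Sum>i<n. of_int (- coeff f i) * z ^ i)"
    by (simp add: sum_negf eq_neg_iff_add_eq_0 add.commute)
  from arg_cong[OF this, of "\<lambda>x. z ^ m * x"]
  show "z ^ (m + n) = (\<Sum>i<n. of_int (- coeff f i) * z ^ (m + i))"
    by (simp add: power_add sum_distrib_left ac_simps)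
qed

text \<open>A complex eigenvalue \<open>z\<close> of \<open>A\<close> gives the solution \<open>z^m\<close>; if \<open>u\<close> had an exact period
  \<open>T\<close>, so would every solution, forcing \<open>z^T = 1\<close>.\<close>
lemma induced_lrs_not_periodic:
  assumes A: "A \<in> carrier_mat n n" and "n \<ge> 1" and "ergodic_toral A" and "T > 0"
  shows "\<exists>m. induced_lrs A (m + T) \<noteq> induced_lrs A m"
proof (rule ccontr)
  assume "\<not> ?thesis"
  hence periodic: "induced_lrs A (m + T) = induced_lrs A m" for m
    by simp
  define B where "B = map_mat (of_int :: int \<Rightarrow> complex) A"
  have B: "B \<in> carrier_mat n n"
    using A unfolding B_def by simp
  obtain zs where zs: "char_poly B = (\<Prod>a\<leftarrow>zs. [:- a, 1:])" "length zs = n"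
    using char_poly_factorized[OF B] by blast
  define z where "z = hd zs"
  have "z \<in> set zs"
    using zs(2) \<open>n \<ge> 1\<close> unfolding z_def by (cases zs) auto
  hence root: "poly (char_poly B) z = 0"
    unfolding zs(1) by (auto simp: poly_prod_list prod_list_zero_iff)
  have "char_poly B = map_poly of_int (char_poly A)"
    unfolding B_def by (rule of_int_hom.char_poly_hom[OF A])
  hence rec_z: "lin_rec (\<lambda>i. - coeff (char_poly A) i) n (\<lambda>m. z ^ m)"
    using root degree_monic_char_poly[OF A] by (intro lin_rec_powers_of_root) auto
  have "period_mod (\<lambda>m. complex_of_int (lrs (\<lambda>i. - coeff (char_poly A) i) n m)) 0 T"
    using periodic A unfolding period_mod_def induced_lrs_def by simp
  from period_mod_lin_rec[OF this rec_z \<open>n \<ge> 1\<close>] have "z ^ T = 1"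
    unfolding period_mod_def by (drule_tac x = 0 in spec) simp
  moreover have "eigenvalue B z"
    using eigenvalue_root_char_poly[OF B] root by simp
  ultimately show False
    using assms(3) \<open>T > 0\<close> unfolding ergodic_toral_def B_def by blast
qed

theorem lemma2p10:
  fixes A :: "int mat" and n p :: nat
  assumes "A \<in> carrier_mat n n" and "n \<ge> 1"
    and "ergodic_toral A"
    and "prime p" and "odd p"
    and "coprime (int p) (det A)"
  shows "\<exists>t::nat.
           (\<forall>k\<in>{1..t}. min_period_mod (induced_lrs A) (int p ^ k) =
                        min_period_mod (induced_lrs A) (int p)) \<and>
           (\<forall>k>t. min_period_mod (induced_lrs A) (int p ^ k) =
                        p ^ (k - t) * min_period_mod (induced_lrs A) (int p))"
proof -
  define c where "c i = - coeff (char_poly A) i" for i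
  have u: "induced_lrs A = lrs c n"
    unfolding induced_lrs_def c_def using assms(1) by simp
  have "coprime (c 0) (int p ^ k)" for k
    using assms(6) unfolding c_def coeff_0_char_poly[OF assms(1)] by (simp add: coprime_commute)
  hence periods: "\<exists>T>0. period_mod (lrs c n) (int p ^ k) T" for k
    using assms(4) by (intro period_mod_exists[OF lin_rec_lrs assms(2)]) (auto simp: prime_gt_0_nat)
  define T\<^sub>1 where "T\<^sub>1 = min_period_mod (lrs c n) (int p)"
  have "T\<^sub>1 > 0" and "period_mod (lrs c n) (int p) T\<^sub>1"
    using min_period_mod_pos[OF periods[of 1]] period_mod_min_period_mod[OF periods[of 1]]
    unfolding T\<^sub>1_def by simp_all
  moreover have "int p > 1"
    using prime_gt_1_nat[OF assms(4)] by simp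
  ultimately obtain t where "t \<ge> 1" and "period_mod (lrs c n) (int p ^ t) T\<^sub>1"
      and "\<not> period_mod (lrs c n) (int p ^ (t + 1)) T\<^sub>1"
    using period_mod_exact_power induced_lrs_not_periodic[OF assms(1-3)] unfolding u by blast
  hence "period_mod (lrs c n) (int p ^ (t + j)) (p ^ j * T\<^sub>1) \<and>
         \<not> period_mod (lrs c n) (int p ^ (t + j + 1)) (p ^ j * T\<^sub>1)" for j
    by (intro lrs_period_lift_iterate[OF assms(2,5)])
  thus ?thesis
    using min_period_mod_prime_power[OF assms(4) periods] unfolding u T\<^sub>1_def by blast
qed

end
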